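(* Let $(\Omega,\mathcal F,Q)$ be the classical Wiener space and let $f:\mathcal P_2(\mathbb R^d)\to\mathbb R$ be differentiable in the sense that its lift $\widetilde f(\eta):=f(Q_\eta)$ is Fréchet differentiable at every $\eta\in L^2(\Omega,\mathcal F,Q;\mathbb R^d)$, with $D\widetilde f(\eta)(\zeta)=E^Q[\partial_\mu f(Q_\eta,\eta)\cdot\zeta]$. Let $Q'$ be any probability measure on $(\Omega,\mathcal F)$. Then the lift w.r.t. $Q'$, $\widetilde f'(\eta'):=f(Q'_{\eta'})$, $\eta'\in L^2(\Omega,\mathcal F,Q';\mathbb R^d)$, is Fréchet differentiable on $L^2(\Omega,\mathcal F,Q';\mathbb R^d)$, and $D\widetilde f'(\eta')=\partial_\mu f(Q'_{\eta'},\eta')$, $Q'$-a.s., i.e. $D\widetilde f'(\eta')(\zeta')=E^{Q'}[\partial_\mu f(Q'_{\eta'},\eta')\cdot\zeta']$ for all $\zeta'\in L^2(Q';\mathbb R^d)$.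
   Context: Classical Wiener space: $\Omega=C_0([0,1])$ (a Radon space), $Q$ Wiener measure, $\mathcal F=\mathcal B(\Omega)\vee\mathcal N_Q$. $Q_\eta$ denotes the law of $\eta$ under $Q$; $\mathcal P_2(\mathbb R^d)$ the probability measures with finite second moment. $\partial_\mu f(\mu,\cdot)$ is the Borel function (depending on $\eta$ only through $\mu=Q_\eta$) representing the Fréchet derivative of the lift. *)

theory Defs
  imports "HOL-Probability.Probability"
begin

text \<open>C_0([0,1]) is realised isometrically inside the
bounded continuous functions on the real line: a path is extended by 0 on
negative times and constantly by its value at 1 for times beyond 1, so the
sup-norm of the extension equals the sup-norm on [0,1].\<close>

definition wiener_Omega :: "(real \<Rightarrow>\<^sub>C real) set" where
  "wiener_Omega = {\<omega>. apply_bcontfun \<omega> 0 = 0 \<and>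
      (\<forall>t. t \<le> 0 \<longrightarrow> apply_bcontfun \<omega> t = 0) \<and>
      (\<forall>t. t \<ge> 1 \<longrightarrow> apply_bcontfun \<omega> t = apply_bcontfun \<omega> 1)}"

definition wiener_borel :: "(real \<Rightarrow>\<^sub>C real) measure" where
  "wiener_borel = restrict_space borel wiener_Omega"

text \<open>Wiener measure on the Borel sets of Omega: the coordinate process has
independent Gaussian increments with variance t - s (and starts at 0, which
is built into Omega).\<close>
definition wiener_measure :: "(real \<Rightarrow>\<^sub>C real) measure \<Rightarrow> bool" where
  "wiener_measure W \<longleftrightarrow> prob_space W \<and> sets W = sets wiener_borel \<and>
     (\<forall>s t. 0 \<le> s \<longrightarrow> s < t \<longrightarrow> t \<le> 1 \<longrightarrow>
        distributed W lborel (\<lambda>\<omega>. apply_bcontfun \<omega> t - apply_bcontfun \<omega> s)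
          (normal_density 0 (sqrt (t - s)))) \<and>
     (\<forall>(ts :: nat \<Rightarrow> real) n. (\<forall>i<n. 0 \<le> ts i \<and> ts i < ts (Suc i)) \<and> ts n \<le> 1 \<longrightarrow>
        prob_space.indep_vars W (\<lambda>_. borel)
          (\<lambda>i \<omega>. apply_bcontfun \<omega> (ts (Suc i)) - apply_bcontfun \<omega> (ts i)) {..<n})"

text \<open>Square-integrable R^d-valued random variables on a measure space
(representatives of elements of L^2), and the L^2 norm.\<close>
definition L2 :: "'b measure \<Rightarrow> ('b \<Rightarrow> 'a::euclidean_space) set" where
  "L2 M = {\<eta> \<in> borel_measurable M. integrable M (\<lambda>\<omega>. (norm (\<eta> \<omega>))\<^sup>2)}"

definition L2norm :: "'b measure \<Rightarrow> ('b \<Rightarrow> 'a::euclidean_space) \<Rightarrow> real" where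
  "L2norm M \<zeta> = sqrt (\<integral>\<omega>. (norm (\<zeta> \<omega>))\<^sup>2 \<partial>M)"

definition law :: "'b measure \<Rightarrow> ('b \<Rightarrow> 'a::euclidean_space) \<Rightarrow> 'a measure" where
  "law M \<eta> = distr M borel \<eta>"

definition lift_frechet_at ::
  "'b measure \<Rightarrow> ('a::euclidean_space measure \<Rightarrow> real) \<Rightarrow> ('a measure \<Rightarrow> 'a \<Rightarrow> 'a)
    \<Rightarrow> ('b \<Rightarrow> 'a) \<Rightarrow> bool" where
  "lift_frechet_at M f df \<eta> \<longleftrightarrow>
     df (law M \<eta>) \<in> borel_measurable borel \<and>
     (\<lambda>\<omega>. df (law M \<eta>) (\<eta> \<omega>)) \<in> L2 M \<and>
     (\<forall>\<epsilon>>0. \<exists>\<delta>>0. \<forall>\<zeta>\<in>L2 M. L2norm M \<zeta> < \<delta> \<longrightarrow>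
        \<bar>f (law M (\<lambda>\<omega>. \<eta> \<omega> + \<zeta> \<omega>)) - f (law M \<eta>)
          - (\<integral>\<omega>. df (law M \<eta>) (\<eta> \<omega>) \<bullet> \<zeta> \<omega> \<partial>M)\<bar> \<le> \<epsilon> * L2norm M \<zeta>)"

end

theory Submission
  imports Defs
begin

(* The lifted derivative at eta only sees joint laws: if (eta, zeta) and (eta', zeta') have the
  same joint law, then so do the perturbed laws of eta + zeta and eta' + zeta', the L2 norms of
  zeta and zeta', and the pairings E[dmu f(., eta) . zeta] and E'[dmu f(., eta') . zeta'].  So the
  Frechet estimate at eta carries over to eta' as soon as eta replicates eta' together with all its
  couplings: eta has the law of eta', and every zeta' has a partner zeta with
  (eta, zeta) ~ (eta', zeta').

  The Wiener space carries two independent uniform variables U1, U2 (cdf transforms of two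
  Brownian increments).  After embedding R^d Borel-injectively into R, eta is a quantile transform
  of U1, and zeta is the conditional quantile function of zeta' given eta' (a disintegration built
  from Radon-Nikodym derivatives) evaluated at (eta, U2).  Nothing about Q' is used except that it
  is a probability space. *)

section \<open>Transfer along joint laws\<close>

lemma distr_eq_integrable_iff:
  fixes g :: "'a \<Rightarrow> 'd::{banach, second_countable_topology}"
  assumes "X \<in> M \<rightarrow>\<^sub>M N" "X' \<in> M' \<rightarrow>\<^sub>M N" "distr M N X = distr M' N X'"
    and "g \<in> borel_measurable N"
  shows "integrable M (\<lambda>\<omega>. g (X \<omega>)) \<longleftrightarrow> integrable M' (\<lambda>\<omega>. g (X' \<omega>))"
  using integrable_distr_eq[OF assms(1,4)] integrable_distr_eq[OF assms(2,4)] assms(3) by simp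

lemma distr_eq_integral_eq:
  fixes g :: "'a \<Rightarrow> 'd::{banach, second_countable_topology}"
  assumes "X \<in> M \<rightarrow>\<^sub>M N" "X' \<in> M' \<rightarrow>\<^sub>M N" "distr M N X = distr M' N X'"
    and "g \<in> borel_measurable N"
  shows "(\<integral>\<omega>. g (X \<omega>) \<partial>M) = (\<integral>\<omega>. g (X' \<omega>) \<partial>M')"
  using integral_distr[OF assms(1,4)] integral_distr[OF assms(2,4)] assms(3) by simp

lemma L2_iff_of_distr_eq:
  fixes \<eta> :: "'b \<Rightarrow> 'a::euclidean_space"
  assumes "\<eta> \<in> borel_measurable M" "\<eta>' \<in> borel_measurable M'"
    and "distr M borel \<eta> = distr M' borel \<eta>'"
  shows "\<eta> \<in> L2 M \<longleftrightarrow> \<eta>' \<in> L2 M'"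
  using assms distr_eq_integrable_iff[OF assms, of "\<lambda>x. (norm x)\<^sup>2"] by (simp add: L2_def)

lemma same_joint_law_perturbation:
  fixes \<eta> \<zeta> :: "'b \<Rightarrow> 'a::euclidean_space" and \<eta>' \<zeta>' :: "'c \<Rightarrow> 'a"
  assumes [measurable]: "\<eta> \<in> borel_measurable M" "\<zeta> \<in> borel_measurable M"
      "\<eta>' \<in> borel_measurable M'" "\<zeta>' \<in> borel_measurable M'"
    and joint: "distr M (borel \<Otimes>\<^sub>M borel) (\<lambda>\<omega>. (\<eta> \<omega>, \<zeta> \<omega>))
      = distr M' (borel \<Otimes>\<^sub>M borel) (\<lambda>\<omega>. (\<eta>' \<omega>, \<zeta>' \<omega>))"
    and [measurable]: "D \<in> borel_measurable borel"
  shows "\<zeta> \<in> L2 M \<longleftrightarrow> \<zeta>' \<in> L2 M'"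
    and "L2norm M \<zeta> = L2norm M' \<zeta>'"
    and "law M (\<lambda>\<omega>. \<eta> \<omega> + \<zeta> \<omega>) = law M' (\<lambda>\<omega>. \<eta>' \<omega> + \<zeta>' \<omega>)"
    and "(\<integral>\<omega>. D (\<eta> \<omega>) \<bullet> \<zeta> \<omega> \<partial>M) = (\<integral>\<omega>. D (\<eta>' \<omega>) \<bullet> \<zeta>' \<omega> \<partial>M')"
proof -
  have pairs: "(\<lambda>\<omega>. (\<eta> \<omega>, \<zeta> \<omega>)) \<in> M \<rightarrow>\<^sub>M borel \<Otimes>\<^sub>M borel"
    "(\<lambda>\<omega>. (\<eta>' \<omega>, \<zeta>' \<omega>)) \<in> M' \<rightarrow>\<^sub>M borel \<Otimes>\<^sub>M borel" by measurable
  note integrable_iff = distr_eq_integrable_iff[OF pairs joint]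
  note integral_eq = distr_eq_integral_eq[OF pairs joint]
  have norm2: "(\<lambda>p::'a \<times> 'a. (norm (snd p))\<^sup>2) \<in> borel_measurable (borel \<Otimes>\<^sub>M borel)"
    by measurable
  show "\<zeta> \<in> L2 M \<longleftrightarrow> \<zeta>' \<in> L2 M'"
    using integrable_iff[OF norm2] by (simp add: L2_def)
  show "L2norm M \<zeta> = L2norm M' \<zeta>'"
    using integral_eq[OF norm2] by (simp add: L2norm_def)
  show "(\<integral>\<omega>. D (\<eta> \<omega>) \<bullet> \<zeta> \<omega> \<partial>M) = (\<integral>\<omega>. D (\<eta>' \<omega>) \<bullet> \<zeta>' \<omega> \<partial>M')"
    using integral_eq[of "\<lambda>p. D (fst p) \<bullet> snd p"] by simp
  have sum: "(\<lambda>p::'a \<times> 'a. fst p + snd p) \<in> borel \<Otimes>\<^sub>M borel \<rightarrow>\<^sub>M borel" by measurable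
  show "law M (\<lambda>\<omega>. \<eta> \<omega> + \<zeta> \<omega>) = law M' (\<lambda>\<omega>. \<eta>' \<omega> + \<zeta>' \<omega>)"
    using distr_distr[OF sum pairs(1)] distr_distr[OF sum pairs(2)] joint
    by (simp add: law_def comp_def)
qed

definition replicates ::
    "'b measure \<Rightarrow> ('b \<Rightarrow> 'a::topological_space) \<Rightarrow> 'c measure \<Rightarrow> ('c \<Rightarrow> 'a) \<Rightarrow> bool" where
  "replicates M \<eta> M' \<eta>' \<longleftrightarrow> \<eta> \<in> borel_measurable M \<and> distr M borel \<eta> = distr M' borel \<eta>' \<and>
     (\<forall>\<zeta>'::'c \<Rightarrow> 'a \<in> borel_measurable M'. \<exists>\<zeta>::'b \<Rightarrow> 'a \<in> borel_measurable M.
        distr M (borel \<Otimes>\<^sub>M borel) (\<lambda>\<omega>. (\<eta> \<omega>, \<zeta> \<omega>))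
          = distr M' (borel \<Otimes>\<^sub>M borel) (\<lambda>\<omega>. (\<eta>' \<omega>, \<zeta>' \<omega>)))"

lemma replicatesD:
  fixes \<eta>' \<zeta>' :: "'c \<Rightarrow> 'a::topological_space"
  assumes "replicates M \<eta> M' \<eta>'"
  shows "\<eta> \<in> borel_measurable M" and "distr M borel \<eta> = distr M' borel \<eta>'"
    and "\<zeta>' \<in> borel_measurable M' \<Longrightarrow> \<exists>\<zeta> \<in> borel_measurable M.
      distr M (borel \<Otimes>\<^sub>M borel) (\<lambda>\<omega>. (\<eta> \<omega>, \<zeta> \<omega>))
        = distr M' (borel \<Otimes>\<^sub>M borel) (\<lambda>\<omega>. (\<eta>' \<omega>, \<zeta>' \<omega>))"
  using assms by (auto simp: replicates_def)

lemma replicates_L2: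
  fixes \<eta> :: "'b \<Rightarrow> 'a::euclidean_space"
  assumes "replicates M \<eta> M' \<eta>'" "\<eta>' \<in> L2 M'"
  shows "\<eta> \<in> L2 M"
  using assms replicatesD[OF assms(1)] L2_iff_of_distr_eq[of \<eta> M \<eta>' M'] by (simp add: L2_def)

lemma lift_frechet_at_replicate:
  fixes \<eta> :: "'b \<Rightarrow> 'a::euclidean_space"
  assumes rep: "replicates M \<eta> M' \<eta>'" and \<eta>': "\<eta>' \<in> L2 M'"
    and fr: "lift_frechet_at M f df \<eta>"
  shows "lift_frechet_at M' f df \<eta>'"
proof -
  have \<eta>_meas[measurable]: "\<eta> \<in> borel_measurable M"
    and \<eta>'_meas[measurable]: "\<eta>' \<in> borel_measurable M'"
    using replicatesD(1)[OF rep] \<eta>' by (auto simp: L2_def)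
  have law: "law M \<eta> = law M' \<eta>'" using replicatesD(2)[OF rep] by (simp add: law_def)
  define D where "D = df (law M \<eta>)"
  have D_meas[measurable]: "D \<in> borel_measurable borel"
    using fr by (simp add: lift_frechet_at_def D_def)
  have "(\<lambda>\<omega>. D (\<eta> \<omega>)) \<in> L2 M" using fr by (simp add: lift_frechet_at_def D_def)
  then have "(\<lambda>\<omega>. D (\<eta>' \<omega>)) \<in> L2 M'"
    using replicatesD(2)[OF rep] distr_eq_integrable_iff[of \<eta> M borel \<eta>' M' "\<lambda>x. (norm (D x))\<^sup>2"]
    by (simp add: L2_def)
  moreover have "\<exists>\<delta>>0. \<forall>\<zeta>'\<in>L2 M'. L2norm M' \<zeta>' < \<delta> \<longrightarrow>
      \<bar>f (law M' (\<lambda>\<omega>. \<eta>' \<omega> + \<zeta>' \<omega>)) - f (law M' \<eta>')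
        - (\<integral>\<omega>. D (\<eta>' \<omega>) \<bullet> \<zeta>' \<omega> \<partial>M')\<bar> \<le> \<epsilon> * L2norm M' \<zeta>'" if "\<epsilon> > 0" for \<epsilon>
  proof -
    obtain \<delta> where "\<delta> > 0" and \<delta>: "\<And>\<zeta>. \<zeta> \<in> L2 M \<Longrightarrow> L2norm M \<zeta> < \<delta> \<Longrightarrow>
        \<bar>f (law M (\<lambda>\<omega>. \<eta> \<omega> + \<zeta> \<omega>)) - f (law M \<eta>)
          - (\<integral>\<omega>. D (\<eta> \<omega>) \<bullet> \<zeta> \<omega> \<partial>M)\<bar> \<le> \<epsilon> * L2norm M \<zeta>"
      using fr \<open>\<epsilon> > 0\<close> unfolding lift_frechet_at_def D_def by blast
    have "\<bar>f (law M' (\<lambda>\<omega>. \<eta>' \<omega> + \<zeta>' \<omega>)) - f (law M' \<eta>')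
        - (\<integral>\<omega>. D (\<eta>' \<omega>) \<bullet> \<zeta>' \<omega> \<partial>M')\<bar> \<le> \<epsilon> * L2norm M' \<zeta>'"
      if \<zeta>': "\<zeta>' \<in> L2 M'" "L2norm M' \<zeta>' < \<delta>" for \<zeta>'
    proof -
      have \<zeta>'_meas: "\<zeta>' \<in> borel_measurable M'" using \<zeta>' by (simp add: L2_def)
      obtain \<zeta> where \<zeta>_meas: "\<zeta> \<in> borel_measurable M" and
        joint: "distr M (borel \<Otimes>\<^sub>M borel) (\<lambda>\<omega>. (\<eta> \<omega>, \<zeta> \<omega>))
          = distr M' (borel \<Otimes>\<^sub>M borel) (\<lambda>\<omega>. (\<eta>' \<omega>, \<zeta>' \<omega>))"
        using replicatesD(3)[OF rep \<zeta>'_meas] by blast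
      note same = same_joint_law_perturbation[OF \<eta>_meas \<zeta>_meas \<eta>'_meas \<zeta>'_meas joint D_meas]
      show ?thesis using \<delta>[of \<zeta>] \<zeta>' same law by simp
    qed
    with \<open>\<delta> > 0\<close> show ?thesis by blast
  qed
  ultimately show ?thesis using fr law by (simp add: lift_frechet_at_def D_def)
qed

section \<open>A Borel embedding of Euclidean space into the reals\<close>

definition binary_digit :: "nat \<Rightarrow> real \<Rightarrow> real" where
  "binary_digit k t = of_int \<lfloor>2^Suc k * t\<rfloor> - 2 * of_int \<lfloor>2^k * t\<rfloor>"

definition ternary_digit :: "nat \<Rightarrow> real \<Rightarrow> real" where
  "ternary_digit m y = of_int \<lfloor>3^Suc m * y\<rfloor> - 3 * of_int \<lfloor>3^m * y\<rfloor>"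

lemma binary_digit_01: "binary_digit k t \<in> {0, 1}"
proof -
  let ?s = "2^k * t"
  have "2 * \<lfloor>?s\<rfloor> \<le> \<lfloor>2 * ?s\<rfloor>" "\<lfloor>2 * ?s\<rfloor> < 2 * \<lfloor>?s\<rfloor> + 2"
    by (simp_all add: le_floor_iff floor_less_iff) linarith+
  then have "\<lfloor>2 * ?s\<rfloor> - 2 * \<lfloor>?s\<rfloor> \<in> {0, 1}" by auto
  moreover have "binary_digit k t = of_int (\<lfloor>2 * ?s\<rfloor> - 2 * \<lfloor>?s\<rfloor>)"
    by (simp add: binary_digit_def mult.assoc)
  ultimately show ?thesis by auto
qed

lemma sum_binary_digits:
  "(\<Sum>k<m. binary_digit k t / 2^Suc k) = of_int \<lfloor>2^m * t\<rfloor> / 2^m - of_int \<lfloor>t\<rfloor>"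
  by (induction m) (simp_all add: binary_digit_def field_simps)

lemma binary_digits_sums:
  assumes "0 \<le> t" "t < 1"
  shows "(\<lambda>k. binary_digit k t / 2^Suc k) sums t"
proof -
  have "(\<lambda>m. of_int \<lfloor>2^m * t\<rfloor> / 2^m) \<longlonglongrightarrow> t"
  proof (rule tendsto_sandwich[of "\<lambda>m. t - (1/2)^m" _ _ "\<lambda>m. t"])
    show "\<forall>\<^sub>F m in sequentially. t - (1/2)^m \<le> of_int \<lfloor>2^m * t\<rfloor> / 2^m"
    proof (intro always_eventually allI)
      fix m :: nat
      have "2^m * t - 1 \<le> of_int \<lfloor>2^m * t\<rfloor>" by linarith
      then have "(2^m * t - 1) / 2^m \<le> of_int \<lfloor>2^m * t\<rfloor> / 2^m"
        by (simp add: divide_right_mono)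
      moreover have "(2^m * t - 1) / 2^m = t - (1/2::real)^m"
        by (simp add: field_simps)
      ultimately show "t - (1/2)^m \<le> of_int \<lfloor>2^m * t\<rfloor> / 2^m" by simp
    qed
    show "\<forall>\<^sub>F m in sequentially. of_int \<lfloor>2^m * t\<rfloor> / 2^m \<le> t"
      by (intro always_eventually allI) (simp add: field_simps)
    show "(\<lambda>m. t - (1/2)^m) \<longlonglongrightarrow> t"
      using tendsto_diff[OF tendsto_const LIMSEQ_power_zero[of "1/2::real"]] by simp
  qed simp
  moreover have "\<lfloor>t\<rfloor> = 0" using assms by (simp add: floor_eq_iff)
  ultimately show ?thesis unfolding sums_def sum_binary_digits by simp
qed

fun ternary_prefix :: "(nat \<Rightarrow> real) \<Rightarrow> nat \<Rightarrow> int" where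
  "ternary_prefix a 0 = 0"
| "ternary_prefix a (Suc m) = 3 * ternary_prefix a m + (if a m = 1 then 1 else 0)"

lemma ternary_prefix_eq:
  assumes "\<And>j. a j \<in> {0, 1}"
  shows "real_of_int (ternary_prefix a m) = 3^m * (\<Sum>j<m. a j / 3^Suc j)"
proof (induction m)
  case (Suc m)
  then show ?case using assms[of m] by (auto simp: field_simps)
qed simp

lemma summable_ternary:
  assumes "\<And>j. a j \<in> {0, 1}"
  shows "summable (\<lambda>j. a j / 3^Suc j :: real)"
proof (rule summable_comparison_test'[of "\<lambda>j. (1/3::real)^Suc j"])
  show "summable (\<lambda>j. (1/3::real)^Suc j)"
    using summable_mult[OF summable_geometric[of "1/3::real"], of "1/3"] by simp
  show "norm (a j / 3^Suc j) \<le> (1/3)^Suc j" for j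
    using assms[of j] by (auto simp: power_one_over)
qed

lemma ternary_tail_bounds:
  assumes a: "\<And>j. a j \<in> {0, 1}"
  shows "0 \<le> 3^m * (\<Sum>j. a (j + m) / 3^Suc (j + m))"
    and "3^m * (\<Sum>j. a (j + m) / 3^Suc (j + m)) < (1::real)"
proof -
  have geom: "(\<lambda>j. (1/3::real)^Suc j / 3^m) sums ((1/2) / 3^m)"
    using sums_divide[OF sums_mult[OF geometric_sums[of "1/3::real"], of "1/3"], of "3^m"]
    by (simp add: field_simps)
  have term_le: "a (j + m) / 3^Suc (j + m) \<le> (1/3)^Suc j / 3^m" for j
    using a[of "j + m"] by (auto simp: power_add field_simps)
  have term_nonneg: "0 \<le> a (j + m) / 3^Suc (j + m)" for j
    using a[of "j + m"] by auto
  have summable: "summable (\<lambda>j. a (j + m) / 3^Suc (j + m))"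
    using summable_ignore_initial_segment[OF summable_ternary[OF a], where k=m] by simp
  show "0 \<le> 3^m * (\<Sum>j. a (j + m) / 3^Suc (j + m))"
    using suminf_nonneg[OF summable term_nonneg] by simp
  have "(\<Sum>j. a (j + m) / 3^Suc (j + m)) \<le> (1/2) / 3^m"
    using suminf_le[OF term_le summable sums_summable[OF geom]] sums_unique[OF geom] by simp
  then show "3^m * (\<Sum>j. a (j + m) / 3^Suc (j + m)) < (1::real)"
    by (simp add: field_simps)
qed

lemma ternary_digit_suminf:
  assumes a: "\<And>j. a j \<in> {0, 1}"
  shows "ternary_digit m (\<Sum>j. a j / 3^Suc j) = a m"
proof -
  have floor_eq: "\<lfloor>3^n * (\<Sum>j. a j / 3^Suc j)\<rfloor> = ternary_prefix a n" for n
  proof -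
    have "3^n * (\<Sum>j. a j / 3^Suc j)
        = real_of_int (ternary_prefix a n) + 3^n * (\<Sum>j. a (j + n) / 3^Suc (j + n))"
      using suminf_split_initial_segment[OF summable_ternary[OF a], where k=n]
        ternary_prefix_eq[OF a, where m=n]
      by (simp add: field_simps)
    then show ?thesis using ternary_tail_bounds[of a n, OF a] by (simp add: floor_eq_iff)
  qed
  show ?thesis unfolding ternary_digit_def floor_eq using a[of m] by auto
qed

definition squash :: "real \<Rightarrow> real" where
  "squash t = 1/2 + t / (2 * (1 + \<bar>t\<bar>))"

definition unsquash :: "real \<Rightarrow> real" where
  "unsquash s = (2 * s - 1) / (1 - \<bar>2 * s - 1\<bar>)"

lemma squash_bounds: "0 \<le> squash t" "squash t < 1"
proof -
  have "\<bar>t / (1 + \<bar>t\<bar>)\<bar> < 1" by (simp add: abs_divide)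
  moreover have "2 * squash t - 1 = t / (1 + \<bar>t\<bar>)"
    by (simp add: squash_def field_simps)
  ultimately show "0 \<le> squash t" "squash t < 1"
    unfolding abs_less_iff by linarith+
qed

lemma unsquash_squash: "unsquash (squash t) = t"
proof -
  have "2 * squash t - 1 = t / (1 + \<bar>t\<bar>)" "\<bar>t / (1 + \<bar>t\<bar>)\<bar> = \<bar>t\<bar> / (1 + \<bar>t\<bar>)"
    by (simp_all add: squash_def field_simps abs_divide)
  moreover have "1 - \<bar>t\<bar> / (1 + \<bar>t\<bar>) = 1 / (1 + \<bar>t\<bar>)"
    by (simp add: field_simps)
  ultimately show ?thesis by (simp add: unsquash_def)
qed

lemma euclidean_borel_embedding:
  "\<exists>(g :: 'a::euclidean_space \<Rightarrow> real) h.
     g \<in> borel_measurable borel \<and> h \<in> borel_measurable borel \<and> (\<forall>x. h (g x) = x)"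
proof -
  define n where "n = DIM('a)"
  obtain e where e: "bij_betw e {0..<n} (Basis :: 'a set)"
    using ex_bij_betw_nat_finite[of "Basis :: 'a set"] unfolding n_def by auto
  \<comment> \<open>The binary digits of the squashed coordinates are interleaved and read in base 3, where
    digits in \<open>{0, 1}\<close> determine the number uniquely (no dyadic ambiguity).\<close>
  define digit where "digit x m = binary_digit (m div n) (squash (x \<bullet> e (m mod n)))" for x m
  define g where "g x = (\<Sum>m. digit x m / 3^Suc m)" for x
  define coord where "coord i y = (\<Sum>k. ternary_digit (k * n + i) y / 2^Suc k)" for i y
  define h where "h y = (\<Sum>i<n. unsquash (coord i y) *\<^sub>R e i)" for y
  have "g \<in> borel_measurable borel"
    unfolding g_def digit_def binary_digit_def squash_def by measurable
  moreover have "h \<in> borel_measurable borel"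
    unfolding h_def coord_def ternary_digit_def unsquash_def by measurable
  moreover have "h (g x) = x" for x
  proof -
    have "digit x m \<in> {0, 1}" for m unfolding digit_def by (rule binary_digit_01)
    then have "ternary_digit (k * n + i) (g x) = binary_digit k (squash (x \<bullet> e i))"
      if "i < n" for i k
      using ternary_digit_suminf[of "digit x"] that
      by (simp add: g_def digit_def)
    then have "coord i (g x) = squash (x \<bullet> e i)" if "i < n" for i
      using binary_digits_sums[OF squash_bounds] that by (simp add: coord_def sums_iff)
    then have "h (g x) = (\<Sum>i<n. (x \<bullet> e i) *\<^sub>R e i)"
      by (simp add: h_def unsquash_squash)
    also have "\<dots> = (\<Sum>b\<in>Basis. (x \<bullet> b) *\<^sub>R b)"
      using sum.reindex_bij_betw[OF e, of "\<lambda>b. (x \<bullet> b) *\<^sub>R b"] by (simp add: atLeast0LessThan)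
    finally show ?thesis by (simp add: euclidean_representation)
  qed
  ultimately show ?thesis by blast
qed

section \<open>Uniform law and quantile transforms\<close>

definition uniform01 :: "real measure" where
  "uniform01 = uniform_measure lborel {0<..<1}"

lemma sets_uniform01[simp, measurable_cong]: "sets uniform01 = sets borel"
  by (simp add: uniform01_def)

lemma space_uniform01[simp]: "space uniform01 = UNIV"
  by (simp add: uniform01_def)

lemma prob_space_uniform01: "prob_space uniform01"
  unfolding uniform01_def by (intro prob_space_uniform_measure) auto

lemma real_distribution_uniform01: "real_distribution uniform01"
  by (simp add: real_distribution_def real_distribution_axioms_def prob_space_uniform01)

lemma emeasure_uniform01:
  "A \<in> sets borel \<Longrightarrow> emeasure uniform01 A = emeasure lborel ({0<..<1} \<inter> A)"
  by (simp add: uniform01_def divide_ennreal_def)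

lemma measure_uniform01:
  "A \<in> sets borel \<Longrightarrow> measure uniform01 A = measure lborel ({0<..<1} \<inter> A)"
  by (simp add: measure_def emeasure_uniform01)

lemma cdf_uniform01: "cdf uniform01 s = max 0 (min 1 s)"
proof -
  consider "s < 0" | "0 \<le> s" "s < 1" | "1 \<le> s" by linarith
  then have "measure lborel ({0<..<1} \<inter> {..s}) = max 0 (min 1 s)"
  proof cases
    case 1
    then have "{0<..<1} \<inter> {..s} = {}" by auto
    with 1 show ?thesis by simp
  next
    case 2
    then have "{0<..<1} \<inter> {..s} = {0<..s}" by auto
    with 2 show ?thesis by simp
  next
    case 3
    then have "{0<..<1} \<inter> {..s} = {0<..<1}" by auto
    with 3 show ?thesis by simp
  qed
  then show ?thesis by (simp add: cdf_def measure_uniform01)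
qed

context real_distribution
begin

lemma borel_measurable_cdf[measurable]: "cdf M \<in> borel_measurable borel"
  by (intro borel_measurable_mono) (simp add: mono_def cdf_nondecreasing)

lemma measure_cdf_le:
  assumes atomless: "\<And>x. measure M {x} = 0" and s: "0 \<le> s" "s < 1"
  shows "measure M {x. cdf M x \<le> s} = s"
proof -
  let ?F = "cdf M" and ?S = "{x. cdf M x \<le> s}"
  have cont: "isCont ?F x" for x using atomless by (simp add: isCont_cdf)
  show ?thesis
  proof (cases "?S = {}")
    case True
    have "s = 0"
    proof (rule ccontr)
      assume "s \<noteq> 0"
      then have "\<forall>\<^sub>F x in at_bot. ?F x < s"
        using s order_tendstoD(2)[OF cdf_lim_at_bot] by simp
      then obtain c where "?F c < s" by (auto simp: eventually_at_bot_linorder)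
      then have "c \<in> ?S" by simp
      with True show False by simp
    qed
    with True show ?thesis by simp
  next
    case False
    have "\<forall>\<^sub>F x in at_top. s < ?F x"
      using order_tendstoD(1)[OF cdf_lim_at_top_prob s(2)] .
    then obtain b where b: "s < ?F b" by (auto simp: eventually_at_top_linorder)
    have bdd: "bdd_above ?S"
    proof (rule bdd_aboveI[of _ b])
      fix x assume "x \<in> ?S"
      then show "x \<le> b" using b cdf_nondecreasing[of b x] by (cases "x \<le> b") auto
    qed
    define a where "a = Sup ?S"
    have "closed ?S"
      using continuous_closed_vimage[OF closed_atMost[of s] cont] by (simp add: vimage_def)
    then have "a \<in> ?S" unfolding a_def by (rule closed_contains_Sup[OF False bdd])
    then have S_eq: "?S = {..a}"
      using bdd cdf_nondecreasing[of _ a] unfolding a_def by (auto intro: cSup_upper order.trans)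
    have "?F a = s"
    proof (rule ccontr)
      assume "?F a \<noteq> s"
      with \<open>a \<in> ?S\<close> have "?F a < s" by simp
      then have "\<forall>\<^sub>F x in at a. ?F x < s"
        using order_tendstoD(2)[OF cont[of a, unfolded isCont_def]] by simp
      then obtain d where "d > 0" and d: "\<And>x. x \<noteq> a \<Longrightarrow> dist x a < d \<Longrightarrow> ?F x < s"
        by (auto simp: eventually_at)
      then have "a + d/2 \<in> ?S" by (auto simp: dist_real_def intro!: less_imp_le)
      with S_eq \<open>d > 0\<close> show False by auto
    qed
    with S_eq show ?thesis by (simp add: cdf_def)
  qed
qed

lemma distr_cdf_eq_uniform01:
  assumes "\<And>x. measure M {x} = 0"
  shows "distr M borel (cdf M) = uniform01"
proof (rule cdf_unique)
  show "real_distribution (distr M borel (cdf M))" by simp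
  show "real_distribution uniform01" by (rule real_distribution_uniform01)
  show "cdf (distr M borel (cdf M)) = cdf uniform01"
  proof
    fix s
    have "cdf M \<in> M \<rightarrow>\<^sub>M borel" by simp
    then have "cdf (distr M borel (cdf M)) s = measure M {x. cdf M x \<le> s}"
      by (simp add: cdf_def measure_distr vimage_def)
    also have "\<dots> = max 0 (min 1 s)"
    proof -
      consider "s < 0" | "0 \<le> s" "s < 1" | "1 \<le> s" by linarith
      then show ?thesis
      proof cases
        case 1
        then have "s < cdf M x" for x using cdf_nonneg[of x] by linarith
        then have "{x. cdf M x \<le> s} = {}" by (auto simp: not_le[symmetric])
        with 1 show ?thesis by simp
      next
        case 2
        then show ?thesis using measure_cdf_le[OF assms] by simp
      next
        case 3
        then have "{x. cdf M x \<le> s} = UNIV" using cdf_bounded_prob by (auto intro: order.trans)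
        with 3 show ?thesis using prob_space by simp
      qed
    qed
    finally show "cdf (distr M borel (cdf M)) s = cdf uniform01 s" by (simp add: cdf_uniform01)
  qed
qed

lemma exists_quantile_transform: "\<exists>I \<in> borel_measurable borel. distr uniform01 borel I = M"
proof -
  interpret cdf_distribution M by unfold_locales
  \<comment> \<open>The library's pseudo-inverse I of the cdf is only measurable on (0, 1), so it is cut off there.\<close>
  define I' where "I' u = indicator {0<..<1::real} u * I u" for u
  have I'_meas: "I' \<in> borel_measurable borel"
    using measurable_CI unfolding I'_def
    by (subst (asm) borel_measurable_restrict_space_iff) auto
  have "distr uniform01 borel I' = M"
  proof (rule measure_eqI)
    fix A assume "A \<in> sets (distr uniform01 borel I')"
    then have A[measurable]: "A \<in> sets borel" by simp
    have "emeasure (distr uniform01 borel I') A = emeasure lborel (I -` A \<inter> {0<..<1})"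
      using I'_meas by (simp add: emeasure_distr emeasure_uniform01 measurable_sets_borel)
        (auto simp: I'_def intro!: arg_cong[where f="emeasure lborel"])
    also have "\<dots> = emeasure (distr (restrict_space lborel {0<..<1::real}) borel I) A"
      using measurable_CI
      by (subst emeasure_distr) (auto simp: emeasure_restrict_space space_restrict_space
          sets_restrict_space_iff intro!: measurable_sets_borel[of I])
    also have "\<dots> = emeasure M A" by (simp add: distr_I_eq_M)
    finally show "emeasure (distr uniform01 borel I') A = emeasure M A" .
  qed simp
  with I'_meas show ?thesis by blast
qed

end

section \<open>Disintegration of a law on the plane\<close>

lemma AE_le_of_set_nn_integral_le:
  fixes f g :: "'a \<Rightarrow> ennreal"
  assumes f[measurable]: "f \<in> borel_measurable M" and g[measurable]: "g \<in> borel_measurable M"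
    and le: "\<And>A. A \<in> sets M \<Longrightarrow>
      (\<integral>\<^sup>+x. f x * indicator A x \<partial>M) \<le> (\<integral>\<^sup>+x. g x * indicator A x \<partial>M)"
    and fin: "integral\<^sup>N M f \<noteq> \<infinity>"
  shows "AE x in M. f x \<le> g x"
proof -
  define S where "S = {x\<in>space M. g x < f x}"
  have S[measurable]: "S \<in> sets M" unfolding S_def by measurable
  have finS: "(\<integral>\<^sup>+x. g x * indicator S x \<partial>M) \<noteq> \<infinity>"
  proof -
    have "(\<integral>\<^sup>+x. g x * indicator S x \<partial>M) \<le> (\<integral>\<^sup>+x. f x * indicator S x \<partial>M)"
      by (intro nn_integral_mono) (auto simp: S_def indicator_def less_imp_le)
    also have "\<dots> \<le> integral\<^sup>N M f" by (intro nn_integral_mono) (auto simp: indicator_def)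
    finally show ?thesis using fin by (auto simp: top_unique)
  qed
  have "(\<integral>\<^sup>+x. f x * indicator S x - g x * indicator S x \<partial>M)
      = (\<integral>\<^sup>+x. f x * indicator S x \<partial>M) - (\<integral>\<^sup>+x. g x * indicator S x \<partial>M)"
  proof (rule nn_integral_diff)
    show "AE x in M. g x * indicator S x \<le> f x * indicator S x"
      by (intro AE_I2) (auto simp: S_def indicator_def less_imp_le)
  qed (use finS in \<open>auto simp: infinity_ennreal_def\<close>)
  also have "\<dots> = 0"
    using le[OF S] finS by (intro diff_eq_0_ennreal)
      (auto simp: less_top[symmetric] top_unique infinity_ennreal_def dest: order.trans)
  finally have "AE x in M. f x * indicator S x - g x * indicator S x = 0"
    by (subst nn_integral_0_iff_AE[symmetric]) auto
  with AE_space show ?thesis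
  proof eventually_elim
    fix x assume x: "x \<in> space M" and eq: "f x * indicator S x - g x * indicator S x = 0"
    show "f x \<le> g x"
    proof (rule ccontr)
      assume "\<not> f x \<le> g x"
      then have "g x < f x" by (simp add: not_le)
      then have "x \<in> S" using x by (simp add: S_def)
      then have "f x - g x = 0" using eq by simp
      then show False using \<open>g x < f x\<close> by (auto simp add: diff_eq_0_iff_ennreal)
    qed
  qed
qed

lemma rat_decseq_approx:
  "\<exists>p. (\<forall>n. p n \<in> \<rat> \<and> t < p n \<and> p n < t + 1 / real (Suc n)) \<and> decseq p"
proof -
  have "\<forall>n. \<exists>r. r \<in> \<rat> \<and> t < r \<and> r < t + 1 / real (Suc n)"
    using Rats_dense_in_real
    by (metis less_add_same_cancel1 of_nat_0_less_iff zero_less_Suc zero_less_divide_1_iff)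
  then obtain qs where qs: "\<And>n. qs n \<in> \<rat> \<and> t < qs n \<and> qs n < t + 1 / real (Suc n)" by metis
  define p where "p n = Min (qs ` {..n})" for n
  have pin: "p n \<in> qs ` {..n}" for n unfolding p_def by (intro Min_in) auto
  have "p n \<in> \<rat> \<and> t < p n \<and> p n < t + 1 / real (Suc n)" for n
  proof -
    obtain m where "m \<le> n" "p n = qs m" using pin[of n] by auto
    moreover have "p n \<le> qs n" unfolding p_def by (intro Min_le) auto
    ultimately show ?thesis using qs[of m] qs[of n] by auto
  qed
  moreover have "decseq p"
    unfolding decseq_def p_def by (auto intro!: Min_antimono)
  ultimately show ?thesis by blast
qed

lemma INT_atMost_eq_atMost:
  fixes t :: real
  assumes "\<And>n. t < p n" "\<And>n. p n < t + 1 / real (Suc n)"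
  shows "(\<Inter>n. {..p n}) = {..t}"
proof (intro equalityI subsetI)
  fix y assume y: "y \<in> (\<Inter>n. {..p n})"
  show "y \<in> {..t}"
  proof (rule ccontr)
    assume "y \<notin> {..t}"
    then obtain n where "1 / real (Suc n) < y - t"
      using reals_Archimedean[of "y - t"] by (auto simp: inverse_eq_divide)
    moreover have "y \<le> p n" using y by auto
    ultimately show False using assms(2)[of n] by linarith
  qed
next
  fix y assume "y \<in> {..t}"
  then have "y \<le> p n" for n using assms(1)[of n] by simp
  then show "y \<in> (\<Inter>n. {..p n})" by simp
qed

lemma sets_borel_prod_eq_sigma_rectangles:
  "sets (borel \<Otimes>\<^sub>M borel :: (real \<times> real) measure)
    = sigma_sets UNIV {A \<times> {..t} | A t. A \<in> sets borel}"
proof -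
  have "sets (borel \<Otimes>\<^sub>M borel :: (real \<times> real) measure)
      = sets (sigma UNIV (sets borel) \<Otimes>\<^sub>M sigma UNIV (range (\<lambda>a::real. {..a})))"
  proof (rule sets_pair_measure_cong)
    show "sets borel = sets (sigma UNIV (sets (borel::real measure)))"
      using sets.sigma_sets_eq[of "borel::real measure"] by simp
    show "sets borel = sets (sigma UNIV (range (\<lambda>a::real. {..a})))"
      by (subst borel_eq_atMost) simp
  qed
  also have "\<dots> = sets (sigma (UNIV \<times> UNIV)
      {a \<times> b | a b. a \<in> sets borel \<and> b \<in> range (\<lambda>a::real. {..a})})"
  proof (subst sigma_prod)
    show "\<exists>E\<subseteq>range (\<lambda>a::real. {..a}). countable E \<and> UNIV = \<Union> E"
    proof (intro exI conjI)
      show "range (\<lambda>n::nat. {..real n}) \<subseteq> range (\<lambda>a::real. {..a})" by auto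
      show "UNIV = \<Union> (range (\<lambda>n::nat. {..real n}))"
        by (auto simp: real_arch_simple)
    qed auto
  qed (auto intro!: exI[of _ "{UNIV}"])
  also have "{a \<times> b | a b. a \<in> sets borel \<and> b \<in> range (\<lambda>a::real. {..a})}
      = {A \<times> {..t} | A t. A \<in> sets borel}"
    by auto
  finally show ?thesis by simp
qed

locale real_plane_law =
  fixes \<pi> :: "(real \<times> real) measure"
  assumes prob_space_\<pi>: "prob_space \<pi>"
    and sets_\<pi>[measurable_cong]: "sets \<pi> = sets (borel \<Otimes>\<^sub>M borel)"
begin

lemma space_\<pi>[simp]: "space \<pi> = UNIV"
  using sets_eq_imp_space_eq[OF sets_\<pi>] by (simp add: space_pair_measure)

interpretation \<pi>: prob_space \<pi> by (rule prob_space_\<pi>)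

definition "marginal = distr \<pi> borel fst"

definition "marginal_below q = distr (density \<pi> (indicator (UNIV \<times> {..q}))) borel fst"

definition "cond_prob_le q = RN_deriv marginal (marginal_below q)"

\<comment> \<open>Each cond_prob_le q is determined only almost everywhere; the infimum over rationals q > t
  gives, for every x, a monotone right-continuous function of t.\<close>
definition "cond_cdf x t = (INF q\<in>{q\<in>\<rat>. t < q}. cond_prob_le q x)"

lemma sets_marginal[simp, measurable_cong]: "sets marginal = sets borel"
  by (simp add: marginal_def)

lemma space_marginal[simp]: "space marginal = UNIV"
  by (simp add: marginal_def)

lemma prob_space_marginal: "prob_space marginal"
  unfolding marginal_def by (intro \<pi>.prob_space_distr) measurable

lemma emeasure_marginal: "A \<in> sets borel \<Longrightarrow> emeasure marginal A = emeasure \<pi> (A \<times> UNIV)"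
  unfolding marginal_def by (subst emeasure_distr) (auto intro!: arg_cong2[where f=emeasure])

lemma sets_marginal_below: "sets (marginal_below q) = sets marginal"
  by (simp add: marginal_below_def)

lemma emeasure_marginal_below:
  assumes A[measurable]: "A \<in> sets borel"
  shows "emeasure (marginal_below q) A = emeasure \<pi> (A \<times> {..q})"
proof -
  have "emeasure (marginal_below q) A
      = emeasure (density \<pi> (indicator (UNIV \<times> {..q}))) (fst -` A \<inter> space \<pi>)"
    unfolding marginal_below_def by (subst emeasure_distr) (auto simp: vimage_fst)
  also have "\<dots> = (\<integral>\<^sup>+x. indicator (UNIV \<times> {..q}) x * indicator (A \<times> UNIV) x \<partial>\<pi>)"
    by (subst emeasure_density)
      (auto intro!: arg_cong2[where f=emeasure] nn_integral_cong simp: indicator_def vimage_fst)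
  also have "\<dots> = (\<integral>\<^sup>+x. indicator (A \<times> {..q}) x \<partial>\<pi>)"
    by (intro nn_integral_cong) (auto simp: indicator_def)
  also have "\<dots> = emeasure \<pi> (A \<times> {..q})" by simp
  finally show ?thesis .
qed

lemma absolutely_continuous_marginal_below: "absolutely_continuous marginal (marginal_below q)"
  unfolding absolutely_continuous_def
proof
  fix A assume "A \<in> null_sets marginal"
  then have "A \<in> sets borel" "emeasure marginal A = 0" by auto
  then have A: "A \<in> sets borel" "emeasure \<pi> (A \<times> UNIV) = 0" by (auto simp: emeasure_marginal)
  have "emeasure \<pi> (A \<times> {..q}) \<le> emeasure \<pi> (A \<times> UNIV)"
    using A by (intro emeasure_mono) auto
  then show "A \<in> null_sets (marginal_below q)"
    using A by (simp add: null_sets_def emeasure_marginal_below sets_marginal_below)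
qed

lemma cond_prob_le_measurable[measurable]: "cond_prob_le q \<in> borel_measurable borel"
  unfolding cond_prob_le_def using borel_measurable_RN_deriv[of marginal "marginal_below q"] by simp

lemma set_nn_integral_cond_prob_le:
  assumes "A \<in> sets borel"
  shows "(\<integral>\<^sup>+x. cond_prob_le q x * indicator A x \<partial>marginal) = emeasure \<pi> (A \<times> {..q})"
proof -
  interpret marginal: prob_space marginal by (rule prob_space_marginal)
  have "density marginal (cond_prob_le q) = marginal_below q" unfolding cond_prob_le_def
    by (rule marginal.density_RN_deriv[OF absolutely_continuous_marginal_below])
      (simp add: sets_marginal_below)
  then have "emeasure (marginal_below q) A = (\<integral>\<^sup>+x. cond_prob_le q x * indicator A x \<partial>marginal)"
    using assms by (subst (asm) eq_commute) (simp add: emeasure_density)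
  then show ?thesis using emeasure_marginal_below[OF assms] by simp
qed

lemma nn_integral_cond_prob_le_finite: "integral\<^sup>N marginal (cond_prob_le q) \<noteq> \<infinity>"
  using set_nn_integral_cond_prob_le[of UNIV q] \<pi>.emeasure_finite by simp

lemma AE_cond_prob_le_mono: "q \<le> r \<Longrightarrow> AE x in marginal. cond_prob_le q x \<le> cond_prob_le r x"
proof (rule AE_le_of_set_nn_integral_le)
  show "(\<integral>\<^sup>+x. cond_prob_le q x * indicator A x \<partial>marginal)
      \<le> (\<integral>\<^sup>+x. cond_prob_le r x * indicator A x \<partial>marginal)"
    if "q \<le> r" "A \<in> sets marginal" for A
    using that by (simp add: set_nn_integral_cond_prob_le) (intro emeasure_mono, auto)
  show "integral\<^sup>N marginal (cond_prob_le q) \<noteq> \<infinity>"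
    by (rule nn_integral_cond_prob_le_finite)
qed auto

lemma AE_cond_prob_le_le_1: "AE x in marginal. cond_prob_le q x \<le> 1"
proof (rule AE_le_of_set_nn_integral_le)
  show "(\<integral>\<^sup>+x. cond_prob_le q x * indicator A x \<partial>marginal) \<le> (\<integral>\<^sup>+x. 1 * indicator A x \<partial>marginal)"
    if "A \<in> sets marginal" for A
    using that by (simp add: set_nn_integral_cond_prob_le emeasure_marginal) (intro emeasure_mono, auto)
  show "integral\<^sup>N marginal (cond_prob_le q) \<noteq> \<infinity>"
    by (rule nn_integral_cond_prob_le_finite)
qed auto

lemma AE_cond_prob_le:
  "AE x in marginal. (\<forall>q\<in>\<rat>. \<forall>r\<in>\<rat>. q \<le> r \<longrightarrow> cond_prob_le q x \<le> cond_prob_le r x) \<and>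
     (\<forall>q\<in>\<rat>. cond_prob_le q x \<le> 1)"
  using AE_cond_prob_le_mono AE_cond_prob_le_le_1 by (simp add: AE_ball_countable countable_rat)

lemma cond_cdf_measurable[measurable]: "(\<lambda>x. cond_cdf x t) \<in> borel_measurable borel"
  unfolding cond_cdf_def
  by (rule borel_measurable_INF) (auto intro: countable_subset[OF _ countable_rat])

lemma cond_cdf_mono: "t \<le> s \<Longrightarrow> cond_cdf x t \<le> cond_cdf x s"
  unfolding cond_cdf_def by (rule INF_superset_mono) auto

lemma cond_cdf_le_cond_prob_le: "q \<in> \<rat> \<Longrightarrow> t < q \<Longrightarrow> cond_cdf x t \<le> cond_prob_le q x"
  unfolding cond_cdf_def by (rule INF_lower) auto

lemma AE_cond_cdf_eq_INF:
  assumes p: "\<And>n. p n \<in> \<rat>" "\<And>n. t < p n" "\<And>n. p n < t + 1 / real (Suc n)"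
  shows "AE x in marginal. cond_cdf x t = (INF n. cond_prob_le (p n) x)"
  using AE_cond_prob_le
proof eventually_elim
  fix x assume x: "(\<forall>q\<in>\<rat>. \<forall>r\<in>\<rat>. q \<le> r \<longrightarrow> cond_prob_le q x \<le> cond_prob_le r x) \<and>
    (\<forall>q\<in>\<rat>. cond_prob_le q x \<le> 1)"
  show "cond_cdf x t = (INF n. cond_prob_le (p n) x)"
  proof (rule antisym)
    show "cond_cdf x t \<le> (INF n. cond_prob_le (p n) x)"
      by (intro INF_greatest cond_cdf_le_cond_prob_le p)
    show "(INF n. cond_prob_le (p n) x) \<le> cond_cdf x t" unfolding cond_cdf_def
    proof (intro INF_greatest)
      fix q assume q: "q \<in> {q \<in> \<rat>. t < q}"
      obtain n where "1 / real (Suc n) < q - t"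
        using q reals_Archimedean[of "q - t"] by (auto simp: inverse_eq_divide)
      then have "p n \<le> q" using p(3)[of n] by linarith
      then have "cond_prob_le (p n) x \<le> cond_prob_le q x" using x q p(1) by auto
      then show "(INF n. cond_prob_le (p n) x) \<le> cond_prob_le q x" by (intro INF_lower2[of n]) auto
    qed
  qed
qed

lemma set_nn_integral_cond_cdf:
  assumes A[measurable]: "A \<in> sets borel"
  shows "(\<integral>\<^sup>+x. cond_cdf x t * indicator A x \<partial>marginal) = emeasure \<pi> (A \<times> {..t})"
proof -
  obtain p where p: "\<And>n. p n \<in> \<rat>" "\<And>n. t < p n" "\<And>n. p n < t + 1 / real (Suc n)"
    and "decseq p"
    using rat_decseq_approx by blast
  have "(\<integral>\<^sup>+x. cond_cdf x t * indicator A x \<partial>marginal)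
      = (\<integral>\<^sup>+x. (INF n. cond_prob_le (p n) x * indicator A x) \<partial>marginal)"
    using AE_cond_cdf_eq_INF[OF p] by (intro nn_integral_cong_AE) (auto simp: indicator_def)
  also have "\<dots> = (INF n. (\<integral>\<^sup>+x. cond_prob_le (p n) x * indicator A x \<partial>marginal))"
  proof (rule nn_integral_monotone_convergence_INF_AE')
    show "AE x in marginal. cond_prob_le (p (Suc i)) x * indicator A x
        \<le> cond_prob_le (p i) x * indicator A x" for i
    proof -
      have "p (Suc i) \<le> p i" using \<open>decseq p\<close> by (simp add: decseq_Suc_iff)
      show ?thesis
        using AE_cond_prob_le
      proof eventually_elim
        case (elim x)
        then show ?case using \<open>p (Suc i) \<le> p i\<close> p(1) by (auto simp: indicator_def)
      qed
    qed
    show "(\<integral>\<^sup>+x. cond_prob_le (p 0) x * indicator A x \<partial>marginal) < \<infinity>"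
      using set_nn_integral_cond_prob_le[OF A, of "p 0"]
      by (simp add: less_top[symmetric] \<pi>.emeasure_finite)
  qed auto
  also have "\<dots> = (INF n. emeasure \<pi> (A \<times> {..p n}))"
    by (simp add: set_nn_integral_cond_prob_le[OF A])
  also have "\<dots> = emeasure \<pi> (\<Inter>n. A \<times> {..p n})"
    by (rule INF_emeasure_decseq') (use \<open>decseq p\<close> in \<open>auto simp: decseq_def intro: order.trans\<close>)
  also have "(\<Inter>n. A \<times> {..p n}) = A \<times> {..t}"
    using INT_atMost_eq_atMost[OF p(2,3)] by auto
  finally show ?thesis .
qed

definition "regular =
  {x. (SUP n::nat. cond_cdf x (real n)) = 1 \<and> (INF n::nat. cond_cdf x (- real n)) = 0}"

lemma regular_sets[measurable]: "regular \<in> sets borel"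
  unfolding regular_def by measurable

lemma nn_integral_cond_cdf: "(\<integral>\<^sup>+x. cond_cdf x t \<partial>marginal) = emeasure \<pi> (UNIV \<times> {..t})"
  using set_nn_integral_cond_cdf[of UNIV t] by simp

lemma AE_cond_cdf_le_1: "AE x in marginal. \<forall>t. cond_cdf x t \<le> 1"
  using AE_cond_prob_le
proof eventually_elim
  fix x assume x: "(\<forall>q\<in>\<rat>. \<forall>r\<in>\<rat>. q \<le> r \<longrightarrow> cond_prob_le q x \<le> cond_prob_le r x) \<and>
    (\<forall>q\<in>\<rat>. cond_prob_le q x \<le> 1)"
  show "\<forall>t. cond_cdf x t \<le> 1"
  proof
    fix t :: real
    obtain q where "q \<in> \<rat>" "t < q" using Rats_dense_in_real[of t "t + 1"] by auto
    then show "cond_cdf x t \<le> 1"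
      using cond_cdf_le_cond_prob_le[of q t x] x by (auto intro: order.trans)
  qed
qed

lemma AE_SUP_cond_cdf_eq_1: "AE x in marginal. (SUP n. cond_cdf x (real n)) = 1"
proof -
  interpret marginal: prob_space marginal by (rule prob_space_marginal)
  have "(\<integral>\<^sup>+x. (SUP n. cond_cdf x (real n)) \<partial>marginal)
      = (SUP n. \<integral>\<^sup>+x. cond_cdf x (real n) \<partial>marginal)"
    by (rule nn_integral_monotone_convergence_SUP) (auto intro!: incseq_SucI le_funI cond_cdf_mono)
  also have "\<dots> = (SUP n. emeasure \<pi> (UNIV \<times> {..real n}))" by (simp add: nn_integral_cond_cdf)
  also have "\<dots> = emeasure \<pi> (\<Union>n. UNIV \<times> {..real n})"
    by (rule SUP_emeasure_incseq) (auto simp: incseq_def)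
  also have "(\<Union>n. UNIV \<times> {..real n}) = (UNIV :: (real \<times> real) set)"
    by (auto simp: real_arch_simple)
  finally have integral: "(\<integral>\<^sup>+x. (SUP n. cond_cdf x (real n)) \<partial>marginal) = 1"
    using \<pi>.emeasure_space_1 by simp
  have le: "AE x in marginal. (SUP n. cond_cdf x (real n)) \<le> 1"
    using AE_cond_cdf_le_1 by eventually_elim (auto intro: SUP_least)
  have "(\<integral>\<^sup>+x. 1 - (SUP n. cond_cdf x (real n)) \<partial>marginal)
      = (\<integral>\<^sup>+x. 1 \<partial>marginal) - (\<integral>\<^sup>+x. (SUP n. cond_cdf x (real n)) \<partial>marginal)"
    by (rule nn_integral_diff) (auto simp: integral le)
  also have "\<dots> = 0" using integral marginal.emeasure_space_1 by simp
  finally have "AE x in marginal. 1 - (SUP n. cond_cdf x (real n)) = 0"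
    by (subst nn_integral_0_iff_AE[symmetric]) auto
  with le show ?thesis by eventually_elim (auto simp: diff_eq_0_iff_ennreal)
qed

lemma AE_INF_cond_cdf_eq_0: "AE x in marginal. (INF n. cond_cdf x (- real n)) = 0"
proof -
  have "(\<integral>\<^sup>+x. (INF n. cond_cdf x (- real n)) \<partial>marginal)
      = (INF n. \<integral>\<^sup>+x. cond_cdf x (- real n) \<partial>marginal)"
  proof (rule nn_integral_monotone_convergence_INF_AE')
    show "AE x in marginal. cond_cdf x (- real (Suc i)) \<le> cond_cdf x (- real i)" for i
      by (intro AE_I2 cond_cdf_mono) simp
    show "(\<integral>\<^sup>+x. cond_cdf x (- real 0) \<partial>marginal) < \<infinity>"
      by (simp add: nn_integral_cond_cdf less_top[symmetric] \<pi>.emeasure_finite)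
  qed auto
  also have "\<dots> = (INF n. emeasure \<pi> (UNIV \<times> {..- real n}))" by (simp add: nn_integral_cond_cdf)
  also have "\<dots> = emeasure \<pi> (\<Inter>n. UNIV \<times> {..- real n})"
    by (rule INF_emeasure_decseq') (auto simp: decseq_def)
  also have "(\<Inter>n. UNIV \<times> {..- real n}) = ({} :: (real \<times> real) set)"
  proof (intro equalityI subsetI)
    fix z :: "real \<times> real" assume z: "z \<in> (\<Inter>n. UNIV \<times> {..- real n})"
    obtain n :: nat where "- snd z < real n" using reals_Archimedean2 by blast
    moreover have "snd z \<le> - real n" using z by auto
    ultimately show "z \<in> {}" by simp
  qed simp
  finally show ?thesis by (subst nn_integral_0_iff_AE[symmetric]) auto
qed

lemma AE_regular: "AE x in marginal. x \<in> regular"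
  using AE_SUP_cond_cdf_eq_1 AE_INF_cond_cdf_eq_0 by eventually_elim (simp add: regular_def)

definition "cond_quantile x u =
  (if x \<in> regular \<and> u \<in> {0<..<1} then Inf {t. ennreal u \<le> cond_cdf x t} else 0)"

lemma cond_cdf_le_1: "x \<in> regular \<Longrightarrow> cond_cdf x t \<le> 1"
proof -
  assume x: "x \<in> regular"
  obtain n :: nat where "t \<le> real n" using real_arch_simple by blast
  then have "cond_cdf x t \<le> cond_cdf x (real n)" by (rule cond_cdf_mono)
  also have "\<dots> \<le> (SUP n. cond_cdf x (real n))" by (rule SUP_upper) simp
  finally show ?thesis using x by (simp add: regular_def)
qed

lemma le_cond_cdf_iff:
  assumes x: "x \<in> regular" and u: "0 < u" "u < 1"
  shows "ennreal u \<le> cond_cdf x t \<longleftrightarrow> cond_quantile x u \<le> t"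
proof -
  let ?S = "{t. ennreal u \<le> cond_cdf x t}"
  have Hx: "cond_quantile x u = Inf ?S" using x u by (simp add: cond_quantile_def)
  have "ennreal u < (SUP n. cond_cdf x (real n))" using x u by (simp add: regular_def)
  then obtain n :: nat where n: "ennreal u < cond_cdf x (real n)" by (auto simp: less_SUP_iff)
  then have ne: "?S \<noteq> {}" by (auto intro!: exI[of _ "real n"] less_imp_le)
  have "(INF n. cond_cdf x (- real n)) < ennreal u" using x u by (simp add: regular_def)
  then obtain m :: nat where m: "cond_cdf x (- real m) < ennreal u" by (auto simp: INF_less_iff)
  have bdd: "bdd_below ?S"
  proof (rule bdd_belowI[of _ "- real m"])
    fix s assume "s \<in> ?S"
    then have "ennreal u \<le> cond_cdf x s" by simp
    show "- real m \<le> s"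
    proof (rule ccontr)
      assume "\<not> - real m \<le> s"
      then have "cond_cdf x s \<le> cond_cdf x (- real m)" by (intro cond_cdf_mono) simp
      with m \<open>ennreal u \<le> cond_cdf x s\<close> show False by simp
    qed
  qed
  show ?thesis
  proof
    assume "ennreal u \<le> cond_cdf x t"
    then show "cond_quantile x u \<le> t" unfolding Hx by (intro cInf_lower bdd) simp
  next
    assume Ht: "cond_quantile x u \<le> t"
    show "ennreal u \<le> cond_cdf x t" unfolding cond_cdf_def
    proof (intro INF_greatest)
      fix q assume q: "q \<in> {q \<in> \<rat>. t < q}"
      then have "Inf ?S < q" using Ht Hx by simp
      then obtain s where s: "s \<in> ?S" "s < q" using cInf_less_iff[OF ne bdd] by auto
      then have "ennreal u \<le> cond_cdf x s" by simp
      also have "cond_cdf x s \<le> cond_prob_le q x" using q s by (intro cond_cdf_le_cond_prob_le) auto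
      finally show "ennreal u \<le> cond_prob_le q x" .
    qed
  qed
qed

lemma cond_quantile_measurable[measurable]:
  "(\<lambda>p. cond_quantile (fst p) (snd p)) \<in> borel_measurable (borel \<Otimes>\<^sub>M borel)"
proof (subst borel_measurable_iff_le, intro allI)
  fix a :: real
  have "{w \<in> space (borel \<Otimes>\<^sub>M borel). cond_quantile (fst w) (snd w) \<le> a} =
    {w \<in> space (borel \<Otimes>\<^sub>M borel).
      (fst w \<in> regular \<and> 0 < snd w \<and> snd w < 1 \<and> ennreal (snd w) \<le> cond_cdf (fst w) a)
       \<or> (\<not> (fst w \<in> regular \<and> 0 < snd w \<and> snd w < 1) \<and> 0 \<le> a)}"
  proof -
    have "cond_quantile x u \<le> a \<longleftrightarrow> (x \<in> regular \<and> 0 < u \<and> u < 1 \<and> ennreal u \<le> cond_cdf x a)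
       \<or> (\<not> (x \<in> regular \<and> 0 < u \<and> u < 1) \<and> 0 \<le> a)" for x u
    proof (cases "x \<in> regular \<and> 0 < u \<and> u < 1")
      case True then show ?thesis using le_cond_cdf_iff[of x u a] by auto
    next
      case False then show ?thesis by (auto simp: cond_quantile_def)
    qed
    then show ?thesis by auto
  qed
  also have "\<dots> \<in> sets (borel \<Otimes>\<^sub>M borel)" by measurable
  finally show "{w \<in> space (borel \<Otimes>\<^sub>M borel). cond_quantile (fst w) (snd w) \<le> a}
    \<in> sets (borel \<Otimes>\<^sub>M borel)" .
qed

lemma sets_cond_quantile_le: "{u. cond_quantile x u \<le> t} \<in> sets borel"
proof -
  have "(\<lambda>u. (x, u)) \<in> borel \<rightarrow>\<^sub>M borel \<Otimes>\<^sub>M borel" by measurable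
  from measurable_compose[OF this cond_quantile_measurable]
  have "(\<lambda>u. cond_quantile x u) \<in> borel_measurable borel" by simp
  then show ?thesis by measurable
qed

lemma emeasure_uniform01_cond_quantile_le:
  assumes x: "x \<in> regular"
  shows "emeasure uniform01 {u. cond_quantile x u \<le> t} = cond_cdf x t"
proof -
  interpret U: prob_space uniform01 by (rule prob_space_uniform01)
  define c where "c = enn2real (cond_cdf x t)"
  have "cond_cdf x t < top" by (rule le_less_trans[OF cond_cdf_le_1[OF x]]) simp
  then have Cc: "cond_cdf x t = ennreal c" unfolding c_def by simp
  have c01: "0 \<le> c" "c \<le> 1" unfolding c_def
    by (rule enn2real_nonneg, rule enn2real_leI) (use cond_cdf_le_1[OF x, of t] in auto)
  have "{0<..<1} \<inter> {u. cond_quantile x u \<le> t} = {0<..<1} \<inter> {..c}"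
  proof -
    have "u \<in> {0<..<1} \<inter> {u. cond_quantile x u \<le> t} \<longleftrightarrow> u \<in> {0<..<1} \<inter> {..c}" for u
    proof (cases "0 < u \<and> u < 1")
      case True
      then show ?thesis
        using le_cond_cdf_iff[OF x, of u t] Cc ennreal_le_iff[OF c01(1), of u] by auto
    qed auto
    then show ?thesis by blast
  qed
  then have "emeasure uniform01 {u. cond_quantile x u \<le> t} = emeasure uniform01 {..c}"
    by (simp add: emeasure_uniform01 sets_cond_quantile_le)
  also have "\<dots> = ennreal (cdf uniform01 c)"
    by (simp add: U.emeasure_eq_measure cdf_def)
  finally show ?thesis using Cc c01 by (simp add: cdf_uniform01)
qed

lemma emeasure_distr_cond_quantile_rectangle:
  assumes A[measurable]: "A \<in> sets borel"
  shows "emeasure (distr (marginal \<Otimes>\<^sub>M uniform01) (borel \<Otimes>\<^sub>M borel)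
      (\<lambda>p. (fst p, cond_quantile (fst p) (snd p)))) (A \<times> {..t}) = emeasure \<pi> (A \<times> {..t})"
proof -
  interpret U: prob_space uniform01 by (rule prob_space_uniform01)
  let ?B = "{p. fst p \<in> A \<and> cond_quantile (fst p) (snd p) \<le> t}"
  have "?B = {p \<in> space (borel \<Otimes>\<^sub>M borel). fst p \<in> A \<and> cond_quantile (fst p) (snd p) \<le> t}"
    by (auto simp: space_pair_measure)
  also have "\<dots> \<in> sets (borel \<Otimes>\<^sub>M borel)" by measurable
  also have "sets (borel \<Otimes>\<^sub>M borel) = sets (marginal \<Otimes>\<^sub>M uniform01)"
    by (rule sets_pair_measure_cong) simp_all
  finally have B: "?B \<in> sets (marginal \<Otimes>\<^sub>M uniform01)" .
  have "emeasure (distr (marginal \<Otimes>\<^sub>M uniform01) (borel \<Otimes>\<^sub>M borel)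
      (\<lambda>p. (fst p, cond_quantile (fst p) (snd p)))) (A \<times> {..t})
      = emeasure (marginal \<Otimes>\<^sub>M uniform01) ?B"
    by (subst emeasure_distr) (auto simp: space_pair_measure intro!: arg_cong2[where f=emeasure])
  also have "\<dots> = (\<integral>\<^sup>+x. emeasure uniform01 (Pair x -` ?B) \<partial>marginal)"
    by (rule U.emeasure_pair_measure_alt[OF B])
  also have "\<dots> = (\<integral>\<^sup>+x. cond_cdf x t * indicator A x \<partial>marginal)"
    using AE_regular
    by (intro nn_integral_cong_AE, eventually_elim)
      (auto simp: emeasure_uniform01_cond_quantile_le indicator_def)
  also have "\<dots> = emeasure \<pi> (A \<times> {..t})" by (rule set_nn_integral_cond_cdf[OF A])
  finally show ?thesis .
qed

lemma distr_marginal_cond_quantile: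
  "distr (marginal \<Otimes>\<^sub>M uniform01) (borel \<Otimes>\<^sub>M borel)
    (\<lambda>p. (fst p, cond_quantile (fst p) (snd p))) = \<pi>"
  (is "?K = \<pi>")
proof -
  define E where "E = {A \<times> {..t} | (A :: real set) (t :: real). A \<in> sets borel}"
  interpret P: pair_prob_space marginal uniform01
    by (intro pair_prob_space.intro pair_sigma_finite.intro prob_space_marginal prob_space_uniform01
        prob_space_imp_sigma_finite)
  interpret K: prob_space ?K by (rule P.prob_space_distr) measurable
  show ?thesis
  proof (rule measure_eqI_generator_eq[where \<Omega>=UNIV and E=E and A="\<lambda>n. UNIV \<times> {..real n}"])
    show "Int_stable E"
    proof (rule Int_stableI)
      fix a b assume "a \<in> E" "b \<in> E"
      then obtain A t B s where "a = A \<times> {..t}" "b = B \<times> {..s}" "A \<in> sets borel" "B \<in> sets borel"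
        by (auto simp: E_def)
      then show "a \<inter> b \<in> E" unfolding E_def
        by (intro CollectI exI[of _ "A \<inter> B"] exI[of _ "min t s"]) auto
    qed
    show "sets ?K = sigma_sets UNIV E" "sets \<pi> = sigma_sets UNIV E"
      using sets_borel_prod_eq_sigma_rectangles sets_\<pi> by (simp_all add: E_def)
    show "emeasure ?K (UNIV \<times> {..real n}) \<noteq> \<infinity>" for n
      using K.emeasure_finite by simp
    show "emeasure ?K X = emeasure \<pi> X" if "X \<in> E" for X
      using that emeasure_distr_cond_quantile_rectangle by (auto simp: E_def)
  qed (auto simp: E_def real_arch_simple)
qed

end

section \<open>Two independent uniforms on Wiener space\<close>

lemma (in real_distribution) distr_cdf_pair_eq_uniform01:
  assumes atomless: "\<And>x. measure M {x} = 0"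
    and XY[measurable]: "(\<lambda>\<omega>. (X \<omega>, Y \<omega>)) \<in> N \<rightarrow>\<^sub>M borel \<Otimes>\<^sub>M borel"
    and law: "distr N (borel \<Otimes>\<^sub>M borel) (\<lambda>\<omega>. (X \<omega>, Y \<omega>)) = M \<Otimes>\<^sub>M M"
  shows "distr N (borel \<Otimes>\<^sub>M borel) (\<lambda>\<omega>. (cdf M (X \<omega>), cdf M (Y \<omega>))) = uniform01 \<Otimes>\<^sub>M uniform01"
proof -
  have FF: "(\<lambda>p. (cdf M (fst p), cdf M (snd p))) \<in> borel \<Otimes>\<^sub>M borel \<rightarrow>\<^sub>M borel \<Otimes>\<^sub>M borel"
    by measurable
  have "distr N (borel \<Otimes>\<^sub>M borel) (\<lambda>\<omega>. (cdf M (X \<omega>), cdf M (Y \<omega>)))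
      = distr (distr N (borel \<Otimes>\<^sub>M borel) (\<lambda>\<omega>. (X \<omega>, Y \<omega>))) (borel \<Otimes>\<^sub>M borel)
          (\<lambda>p. (cdf M (fst p), cdf M (snd p)))"
    by (subst distr_distr[OF FF XY]) (simp add: comp_def)
  also have "\<dots> = distr (M \<Otimes>\<^sub>M M) (borel \<Otimes>\<^sub>M borel) (\<lambda>(x, y). (cdf M x, cdf M y))"
    unfolding law by (simp add: case_prod_beta')
  also have "\<dots> = distr M borel (cdf M) \<Otimes>\<^sub>M distr M borel (cdf M)"
    by (rule pair_measure_distr[symmetric])
      (simp_all add: distr_cdf_eq_uniform01[OF atomless] prob_space_uniform01
        prob_space_imp_sigma_finite)
  also have "\<dots> = uniform01 \<Otimes>\<^sub>M uniform01"
    by (simp add: distr_cdf_eq_uniform01[OF atomless])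
  finally show ?thesis .
qed

lemma measure_density_lborel_singleton:
  assumes "f \<in> borel_measurable borel"
  shows "measure (density lborel f) {x :: real} = 0"
proof -
  have null: "AE y in lborel. f y * indicator {x} y = 0"
    using AE_lborel_singleton[of x] by eventually_elim (auto simp: indicator_def)
  have "emeasure (density lborel f) {x} = (\<integral>\<^sup>+y. f y * indicator {x} y \<partial>lborel)"
    using assms by (subst emeasure_density) auto
  also have "\<dots> = (\<integral>\<^sup>+y. 0 \<partial>lborel)"
    using nn_integral_cong_AE[OF null] by simp
  finally show ?thesis by (simp add: measure_def)
qed

lemma wiener_increments_distr:
  fixes Q0 :: "(real \<Rightarrow>\<^sub>C real) measure"
  assumes W: "wiener_measure Q0"
  defines "N \<equiv> density lborel (normal_density 0 (sqrt (1/2)))"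
    and "Y \<equiv> \<lambda>i \<omega>. apply_bcontfun \<omega> (real (Suc i) / 2) - apply_bcontfun \<omega> (real i / 2)"
  shows "\<And>i. i \<in> {0, 1} \<Longrightarrow> Y i \<in> borel_measurable Q0"
    and "distr Q0 (borel \<Otimes>\<^sub>M borel) (\<lambda>\<omega>. (Y 0 \<omega>, Y 1 \<omega>)) = N \<Otimes>\<^sub>M N"
proof -
  interpret Q: prob_space Q0 using W by (simp add: wiener_measure_def)
  have increment: "\<And>s t. 0 \<le> s \<Longrightarrow> s < t \<Longrightarrow> t \<le> 1 \<Longrightarrow>
      distributed Q0 lborel (\<lambda>\<omega>. apply_bcontfun \<omega> t - apply_bcontfun \<omega> s)
        (normal_density 0 (sqrt (t - s)))"
    and indep_increments: "\<And>(ts :: nat \<Rightarrow> real) n.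
      (\<forall>i<n. 0 \<le> ts i \<and> ts i < ts (Suc i)) \<and> ts n \<le> 1 \<Longrightarrow>
      Q.indep_vars (\<lambda>_. borel)
        (\<lambda>i \<omega>. apply_bcontfun \<omega> (ts (Suc i)) - apply_bcontfun \<omega> (ts i)) {..<n}"
    using W unfolding wiener_measure_def by auto
  have indep: "Q.indep_vars (\<lambda>_. borel) Y {..<2}"
    using indep_increments[of 2 "\<lambda>i. real i / 2"]
    by (simp add: Y_def less_Suc_eq numeral_2_eq_2)
  have normal: "distributed Q0 lborel (Y i) (normal_density 0 (sqrt (1/2)))"
    if i: "i \<in> {0, 1}" for i
  proof -
    consider "i = 0" | "i = 1" using i by blast
    then show ?thesis
    proof cases
      case 1
      then show ?thesis using increment[of 0 "1/2"] by (simp add: Y_def)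
    next
      case 2
      then show ?thesis using increment[of "1/2" 1] by (simp add: Y_def)
    qed
  qed
  show "Y i \<in> borel_measurable Q0" if "i \<in> {0, 1}" for i
    using distributed_measurable[OF normal[OF that]]
    by (simp add: measurable_cong_sets[OF refl sets_lborel])
  have law: "distr Q0 borel (Y i) = N" if "i \<in> {0, 1}" for i
    using distributed_distr_eq_density[OF normal[OF that]]
    by (simp add: N_def distr_cong[OF refl sets_lborel])
  have "Q.indep_var borel (Y 0) borel (Y 1)"
  proof -
    have "Q.indep_var (PiM {0} (\<lambda>_. borel)) (\<lambda>\<omega>. restrict (\<lambda>i. Y i \<omega>) {0})
        (PiM {1} (\<lambda>_. borel)) (\<lambda>\<omega>. restrict (\<lambda>i. Y i \<omega>) {1})"
      by (rule Q.indep_var_restrict[OF indep]) auto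
    then have "Q.indep_var borel ((\<lambda>f. f 0) \<circ> (\<lambda>\<omega>. restrict (\<lambda>i. Y i \<omega>) {0}))
        borel ((\<lambda>f. f 1) \<circ> (\<lambda>\<omega>. restrict (\<lambda>i. Y i \<omega>) {1}))"
      by (rule Q.indep_var_compose) (auto intro: measurable_component_singleton)
    then show ?thesis by (simp add: comp_def)
  qed
  then show "distr Q0 (borel \<Otimes>\<^sub>M borel) (\<lambda>\<omega>. (Y 0 \<omega>, Y 1 \<omega>)) = N \<Otimes>\<^sub>M N"
    unfolding Q.indep_var_distribution_eq using law by simp
qed

lemma wiener_exists_two_uniforms:
  fixes Q0 :: "(real \<Rightarrow>\<^sub>C real) measure"
  assumes "wiener_measure Q0"
  shows "\<exists>U1 U2. U1 \<in> borel_measurable Q0 \<and> U2 \<in> borel_measurable Q0 \<and>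
      distr Q0 (borel \<Otimes>\<^sub>M borel) (\<lambda>\<omega>. (U1 \<omega>, U2 \<omega>)) = uniform01 \<Otimes>\<^sub>M uniform01"
proof -
  define N where "N = density lborel (normal_density 0 (sqrt (1/2)))"
  define Y where "Y i \<omega> = apply_bcontfun \<omega> (real (Suc i) / 2) - apply_bcontfun \<omega> (real i / 2)"
    for i and \<omega> :: "real \<Rightarrow>\<^sub>C real"
  note increments = wiener_increments_distr[OF assms, folded N_def Y_def]
  have [measurable]: "Y 0 \<in> borel_measurable Q0" "Y 1 \<in> borel_measurable Q0"
    using increments(1) by auto
  have pair: "(\<lambda>\<omega>. (Y 0 \<omega>, Y 1 \<omega>)) \<in> Q0 \<rightarrow>\<^sub>M borel \<Otimes>\<^sub>M borel" by measurable
  interpret N: real_distribution N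
    using prob_space_normal_density
    by (simp add: N_def real_distribution_def real_distribution_axioms_def)
  have "distr Q0 (borel \<Otimes>\<^sub>M borel) (\<lambda>\<omega>. (cdf N (Y 0 \<omega>), cdf N (Y 1 \<omega>))) = uniform01 \<Otimes>\<^sub>M uniform01"
    by (rule N.distr_cdf_pair_eq_uniform01[OF _ pair increments(2)])
      (auto simp: N_def measure_density_lborel_singleton)
  then show ?thesis
    by (intro exI[of _ "\<lambda>\<omega>. cdf N (Y 0 \<omega>)"] exI[of _ "\<lambda>\<omega>. cdf N (Y 1 \<omega>)"] conjI) measurable
qed

section \<open>Replication from two uniforms\<close>

lemma replicates_comp:
  fixes g :: "'a::euclidean_space \<Rightarrow> 'd::euclidean_space"
  assumes rep: "replicates M X M' (\<lambda>\<omega>. g (\<eta>' \<omega>))"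
    and [measurable]: "\<eta>' \<in> borel_measurable M'"
      "g \<in> borel_measurable borel" "h \<in> borel_measurable borel"
    and inverse: "\<And>x. h (g x) = x"
  shows "replicates M (\<lambda>\<omega>. h (X \<omega>)) M' \<eta>'"
proof -
  have [measurable]: "X \<in> borel_measurable M" using replicatesD(1)[OF rep] .
  have "distr M borel (\<lambda>\<omega>. h (X \<omega>)) = distr (distr M borel X) borel h"
    using distr_distr[of h borel borel X M] by (simp add: comp_def)
  also have "\<dots> = distr (distr M' borel (\<lambda>\<omega>. g (\<eta>' \<omega>))) borel h"
    using replicatesD(2)[OF rep] by simp
  also have "\<dots> = distr M' borel \<eta>'"
    using distr_distr[of h borel borel "\<lambda>\<omega>. g (\<eta>' \<omega>)" M'] by (simp add: comp_def inverse)
  finally have law: "distr M borel (\<lambda>\<omega>. h (X \<omega>)) = distr M' borel \<eta>'" .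
  have hh: "(\<lambda>p. (h (fst p), h (snd p))) \<in> borel \<Otimes>\<^sub>M borel \<rightarrow>\<^sub>M borel \<Otimes>\<^sub>M borel"
    by measurable
  have "\<exists>\<zeta> \<in> borel_measurable M. distr M (borel \<Otimes>\<^sub>M borel) (\<lambda>\<omega>. (h (X \<omega>), \<zeta> \<omega>))
      = distr M' (borel \<Otimes>\<^sub>M borel) (\<lambda>\<omega>. (\<eta>' \<omega>, \<zeta>' \<omega>))"
    if [measurable]: "\<zeta>' \<in> borel_measurable M'" for \<zeta>' :: "_ \<Rightarrow> 'a"
  proof -
    have "(\<lambda>\<omega>. g (\<zeta>' \<omega>)) \<in> borel_measurable M'" by measurable
    then obtain \<zeta> where [measurable]: "\<zeta> \<in> borel_measurable M" and joint:
      "distr M (borel \<Otimes>\<^sub>M borel) (\<lambda>\<omega>. (X \<omega>, \<zeta> \<omega>))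
        = distr M' (borel \<Otimes>\<^sub>M borel) (\<lambda>\<omega>. (g (\<eta>' \<omega>), g (\<zeta>' \<omega>)))"
      using replicatesD(3)[OF rep] by blast
    have pair: "(\<lambda>\<omega>. (X \<omega>, \<zeta> \<omega>)) \<in> M \<rightarrow>\<^sub>M borel \<Otimes>\<^sub>M borel"
      and pair': "(\<lambda>\<omega>. (g (\<eta>' \<omega>), g (\<zeta>' \<omega>))) \<in> M' \<rightarrow>\<^sub>M borel \<Otimes>\<^sub>M borel" by measurable
    have "distr M (borel \<Otimes>\<^sub>M borel) (\<lambda>\<omega>. (h (X \<omega>), h (\<zeta> \<omega>)))
        = distr (distr M (borel \<Otimes>\<^sub>M borel) (\<lambda>\<omega>. (X \<omega>, \<zeta> \<omega>))) (borel \<Otimes>\<^sub>M borel)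
            (\<lambda>p. (h (fst p), h (snd p)))"
      using distr_distr[OF hh pair] by (simp add: comp_def)
    also have "\<dots> = distr M' (borel \<Otimes>\<^sub>M borel) (\<lambda>\<omega>. (\<eta>' \<omega>, \<zeta>' \<omega>))"
      using distr_distr[OF hh pair'] by (simp add: joint comp_def inverse)
    finally show ?thesis by (intro bexI[of _ "\<lambda>\<omega>. h (\<zeta> \<omega>)"]) auto
  qed
  then show ?thesis using law by (simp add: replicates_def)
qed

lemma replicates_real_from_two_uniforms:
  fixes X' :: "'c \<Rightarrow> real"
  assumes [measurable]: "U1 \<in> borel_measurable M" "U2 \<in> borel_measurable M"
    and uniforms: "distr M (borel \<Otimes>\<^sub>M borel) (\<lambda>\<omega>. (U1 \<omega>, U2 \<omega>)) = uniform01 \<Otimes>\<^sub>M uniform01"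
    and "prob_space M'" and [measurable]: "X' \<in> borel_measurable M'"
  shows "\<exists>X. replicates M X M' X'"
proof -
  interpret M': prob_space M' by fact
  interpret U: prob_space uniform01 by (rule prob_space_uniform01)
  define \<mu> where "\<mu> = distr M' borel X'"
  have sets_\<mu>[simp, measurable_cong]: "sets \<mu> = sets borel" by (simp add: \<mu>_def)
  obtain I where [measurable]: "I \<in> borel_measurable borel"
    and quantile: "distr uniform01 borel I = \<mu>"
    using real_distribution.exists_quantile_transform[of \<mu>] by (auto simp: \<mu>_def)
  have IU: "(\<lambda>\<omega>. (I (U1 \<omega>), U2 \<omega>)) \<in> M \<rightarrow>\<^sub>M borel \<Otimes>\<^sub>M borel" by measurable
  have "\<mu> \<Otimes>\<^sub>M uniform01 = distr uniform01 borel I \<Otimes>\<^sub>M distr uniform01 borel (\<lambda>x. x)"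
    by (simp add: quantile distr_id2)
  also have "\<dots> = distr (uniform01 \<Otimes>\<^sub>M uniform01) (borel \<Otimes>\<^sub>M borel) (\<lambda>(x, y). (I x, y))"
    by (rule pair_measure_distr)
      (simp_all add: distr_id2 prob_space_imp_sigma_finite prob_space_uniform01)
  also have "\<dots> = distr M (borel \<Otimes>\<^sub>M borel) (\<lambda>\<omega>. (I (U1 \<omega>), U2 \<omega>))"
  proof -
    have "(\<lambda>(x, y). (I x, y)) \<in> borel \<Otimes>\<^sub>M borel \<rightarrow>\<^sub>M borel \<Otimes>\<^sub>M borel"
      and "(\<lambda>\<omega>. (U1 \<omega>, U2 \<omega>)) \<in> M \<rightarrow>\<^sub>M borel \<Otimes>\<^sub>M borel" by measurable
    from distr_distr[OF this] show ?thesis unfolding uniforms by (simp add: comp_def)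
  qed
  finally have IU_law: "distr M (borel \<Otimes>\<^sub>M borel) (\<lambda>\<omega>. (I (U1 \<omega>), U2 \<omega>)) = \<mu> \<Otimes>\<^sub>M uniform01"
    by (rule sym)
  have pushforward: "distr M L (\<lambda>\<omega>. F (I (U1 \<omega>)) (U2 \<omega>))
      = distr (\<mu> \<Otimes>\<^sub>M uniform01) L (\<lambda>p. F (fst p) (snd p))"
    if "(\<lambda>p. F (fst p) (snd p)) \<in> borel \<Otimes>\<^sub>M borel \<rightarrow>\<^sub>M L" for F L
    using distr_distr[OF that IU] by (simp add: IU_law comp_def)
  define X where "X \<omega> = I (U1 \<omega>)" for \<omega>
  have X_meas: "X \<in> borel_measurable M" unfolding X_def by measurable
  have "(\<lambda>p. fst p) \<in> borel \<Otimes>\<^sub>M borel \<rightarrow>\<^sub>M (borel :: real measure)" by measurable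
  from pushforward[OF this] have "distr M borel X = distr (\<mu> \<Otimes>\<^sub>M uniform01) \<mu> fst"
    by (simp add: X_def distr_cong[OF refl sets_\<mu>[symmetric]])
  also have "\<dots> = \<mu>" by (rule U.distr_pair_fst)
  finally have X_law: "distr M borel X = distr M' borel X'" unfolding \<mu>_def .
  have X_joint: "\<exists>Y \<in> borel_measurable M. distr M (borel \<Otimes>\<^sub>M borel) (\<lambda>\<omega>. (X \<omega>, Y \<omega>))
      = distr M' (borel \<Otimes>\<^sub>M borel) (\<lambda>\<omega>. (X' \<omega>, Y' \<omega>))"
    if [measurable]: "Y' \<in> borel_measurable M'" for Y' :: "'c \<Rightarrow> real"
  proof -
    define \<pi> where "\<pi> = distr M' (borel \<Otimes>\<^sub>M borel) (\<lambda>\<omega>. (X' \<omega>, Y' \<omega>))"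
    have fst_meas: "(\<lambda>p. fst p) \<in> borel \<Otimes>\<^sub>M borel \<rightarrow>\<^sub>M (borel :: real measure)"
      and pair_meas: "(\<lambda>\<omega>. (X' \<omega>, Y' \<omega>)) \<in> M' \<rightarrow>\<^sub>M borel \<Otimes>\<^sub>M borel" by measurable
    interpret \<pi>: real_plane_law \<pi>
      using pair_meas by (intro real_plane_law.intro) (simp_all add: \<pi>_def M'.prob_space_distr)
    have "\<pi>.marginal = distr \<pi> borel fst" by (rule \<pi>.marginal_def)
    also have "\<dots> = \<mu>"
      using distr_distr[OF fst_meas pair_meas] by (simp add: \<pi>_def \<mu>_def comp_def)
    finally have "\<pi>.marginal = \<mu>" .
    have "(\<lambda>p. (fst p, \<pi>.cond_quantile (fst p) (snd p))) \<in> borel \<Otimes>\<^sub>M borel \<rightarrow>\<^sub>M borel \<Otimes>\<^sub>M borel"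
      by measurable
    from pushforward[OF this]
    have "distr M (borel \<Otimes>\<^sub>M borel) (\<lambda>\<omega>. (X \<omega>, \<pi>.cond_quantile (X \<omega>) (U2 \<omega>))) = \<pi>"
      using \<pi>.distr_marginal_cond_quantile \<open>\<pi>.marginal = \<mu>\<close> by (simp add: X_def)
    moreover have "(\<lambda>\<omega>. \<pi>.cond_quantile (X \<omega>) (U2 \<omega>)) \<in> borel_measurable M"
      using measurable_compose[OF IU \<pi>.cond_quantile_measurable] by (simp add: X_def)
    ultimately show ?thesis unfolding \<pi>_def by (rule bexI)
  qed
  have "replicates M X M' X'"
    unfolding replicates_def using X_meas X_law X_joint by blast
  then show ?thesis by blast
qed

lemma replicates_from_two_uniforms:
  fixes \<eta>' :: "'c \<Rightarrow> 'a::euclidean_space"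
  assumes "U1 \<in> borel_measurable M" "U2 \<in> borel_measurable M"
    and "distr M (borel \<Otimes>\<^sub>M borel) (\<lambda>\<omega>. (U1 \<omega>, U2 \<omega>)) = uniform01 \<Otimes>\<^sub>M uniform01"
    and "prob_space M'" and "\<eta>' \<in> borel_measurable M'"
  shows "\<exists>\<eta>. replicates M \<eta> M' \<eta>'"
proof -
  obtain g :: "'a \<Rightarrow> real" and h where g: "g \<in> borel_measurable borel"
    and h: "h \<in> borel_measurable borel" and inverse: "\<And>x. h (g x) = x"
    using euclidean_borel_embedding by blast
  have "(\<lambda>\<omega>. g (\<eta>' \<omega>)) \<in> borel_measurable M'" using assms(5) g by measurable
  then obtain X where "replicates M X M' (\<lambda>\<omega>. g (\<eta>' \<omega>))"
    using replicates_real_from_two_uniforms[OF assms(1-4)] by blast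
  then show ?thesis using replicates_comp[OF _ assms(5) g h inverse] by blast
qed

theorem lemmaA1:
  fixes Q0 Q' :: "(real \<Rightarrow>\<^sub>C real) measure"
    and f :: "'a::euclidean_space measure \<Rightarrow> real"
    and df :: "'a measure \<Rightarrow> 'a \<Rightarrow> 'a"
  assumes "wiener_measure Q0"
    and "\<And>\<eta>. \<eta> \<in> L2 (completion Q0) \<Longrightarrow> lift_frechet_at (completion Q0) f df \<eta>"
    and "prob_space Q'"
    and "sets Q' = sets (completion Q0)"
  shows "\<forall>\<eta>'\<in>L2 Q'. lift_frechet_at Q' f df \<eta>'"
proof
  fix \<eta>' :: "_ \<Rightarrow> 'a" assume \<eta>': "\<eta>' \<in> L2 Q'"
  obtain U1 U2 where [measurable]: "U1 \<in> borel_measurable Q0" "U2 \<in> borel_measurable Q0"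
    and uniforms: "distr Q0 (borel \<Otimes>\<^sub>M borel) (\<lambda>\<omega>. (U1 \<omega>, U2 \<omega>)) = uniform01 \<Otimes>\<^sub>M uniform01"
    using wiener_exists_two_uniforms[OF assms(1)] by blast
  have "distr (completion Q0) (borel \<Otimes>\<^sub>M borel) (\<lambda>\<omega>. (U1 \<omega>, U2 \<omega>)) = uniform01 \<Otimes>\<^sub>M uniform01"
    using uniforms by (subst distr_completion) measurable
  moreover have "U1 \<in> borel_measurable (completion Q0)" "U2 \<in> borel_measurable (completion Q0)"
    by (auto intro: measurable_completion)
  ultimately obtain \<eta> where rep: "replicates (completion Q0) \<eta> Q' \<eta>'"
    using replicates_from_two_uniforms[of U1 "completion Q0" U2 Q' \<eta>'] \<eta>' assms(3)
    by (auto simp: L2_def)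
  then have "lift_frechet_at (completion Q0) f df \<eta>"
    using assms(2) replicates_L2 \<eta>' by blast
  then show "lift_frechet_at Q' f df \<eta>'"
    using lift_frechet_at_replicate[OF rep \<eta>'] by blast
qed

end
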